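(* For $\phi\in L^\infty$, the slant H-Toeplitz operator $V_\phi$ is compact if and only if $\phi=0$.
   Context: $L^2=L^2(\mathbb{T})$ with orthonormal basis $e_n(z)=z^n$, $n\in\mathbb{Z}$; $H^2$ is the closed span of $\{e_n\}_{n\ge0}$, $P:L^2\to H^2$ the orthogonal projection, $M_\phi$ multiplication by $\phi$. $W:L^2\to L^2$: $We_n=e_{n/2}$ for $n$ even, $0$ for $n$ odd. $K:H^2\to L^2$: $Ke_{2n}=e_n$, $Ke_{2n+1}=e_{-n-1}$ ($n\ge0$). The slant H-Toeplitz operator is $V_\phi=WPM_\phi K:H^2\to H^2$. *)

theory Defs
  imports "HOL-Analysis.Analysis"
begin

text \<open>The circle T is parametrised by t in [0, 2 pi] (z = exp(i t)), with normalised
Lebesgue measure. L^2(T) is identified with square-summable Fourier coefficient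
sequences int => complex via the orthonormal basis e_n (Parseval); H^2 consists of
those sequences vanishing at negative indices.\<close>

definition Linf :: "(real \<Rightarrow> complex) set" where
  "Linf = {\<phi>. \<phi> \<in> borel_measurable (lebesgue_on {0..2*pi}) \<and>
              (\<exists>C. AE t in lebesgue_on {0..2*pi}. norm (\<phi> t) \<le> C)}"

definition fourier_coeff :: "(real \<Rightarrow> complex) \<Rightarrow> int \<Rightarrow> complex" where
  "fourier_coeff \<phi> n = (1 / (2 * pi)) *
     integral\<^sup>L (lebesgue_on {0..2*pi}) (\<lambda>t. \<phi> t * exp (- (\<i> * of_int n * of_real t)))"

definition ell2 :: "(int \<Rightarrow> complex) set" where
  "ell2 = {c. (\<lambda>m. (norm (c m))^2) summable_on UNIV}"

definition H2 :: "(int \<Rightarrow> complex) set" where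
  "H2 = {c \<in> ell2. \<forall>m<0. c m = 0}"

definition l2norm :: "(int \<Rightarrow> complex) \<Rightarrow> real" where
  "l2norm c = sqrt (infsum (\<lambda>m. (norm (c m))^2) UNIV)"

definition Mult :: "(real \<Rightarrow> complex) \<Rightarrow> (int \<Rightarrow> complex) \<Rightarrow> (int \<Rightarrow> complex)" where
  "Mult \<phi> c = (\<lambda>m. infsum (\<lambda>j. fourier_coeff \<phi> (m - j) * c j) UNIV)"

definition Proj :: "(int \<Rightarrow> complex) \<Rightarrow> (int \<Rightarrow> complex)" where
  "Proj c = (\<lambda>m. if m \<ge> 0 then c m else 0)"

text \<open>W e_n = e_(n/2) for n even, 0 for n odd.\<close>
definition Wop :: "(int \<Rightarrow> complex) \<Rightarrow> (int \<Rightarrow> complex)" where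
  "Wop c = (\<lambda>m. c (2 * m))"

text \<open>K e_(2n) = e_n, K e_(2n+1) = e_(-n-1) for n >= 0.\<close>
definition Kop :: "(int \<Rightarrow> complex) \<Rightarrow> (int \<Rightarrow> complex)" where
  "Kop c = (\<lambda>m. if m \<ge> 0 then c (2 * m) else c (- 2 * m - 1))"

definition slant_HT :: "(real \<Rightarrow> complex) \<Rightarrow> (int \<Rightarrow> complex) \<Rightarrow> (int \<Rightarrow> complex)" where
  "slant_HT \<phi> = Wop \<circ> Proj \<circ> Mult \<phi> \<circ> Kop"

definition compact_on_H2 :: "((int \<Rightarrow> complex) \<Rightarrow> (int \<Rightarrow> complex)) \<Rightarrow> bool" where
  "compact_on_H2 T = (\<forall>(f :: nat \<Rightarrow> int \<Rightarrow> complex) (B::real). (\<forall>k. f k \<in> H2 \<and> l2norm (f k) \<le> B) \<longrightarrow>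
      (\<exists>r g. strict_mono r \<and> g \<in> ell2 \<and>
             (\<lambda>k. l2norm (\<lambda>m. T (f (r k)) m - g m)) \<longlonglongrightarrow> 0))"

end

theory Submission
  imports Defs
begin

text \<open>Let a = fourier_coeff phi. The slant H-Toeplitz operator maps the basis vector
e_(2n), n >= 0, to the sequence m |-> a (2m - n) on m >= 0. Choosing n = 2 (k + |j|) - j,
the images of these unit vectors all take the value a j at the position k + |j|, which
escapes to infinity; since a is square summable (Bessel's inequality), an L^2-limit g
of a subsequence of the images satisfies g m -> 0 there, so compactness forces a j = 0.
A function whose Fourier coefficients all vanish is orthogonal to the trigonometric
polynomials, hence (Stone-Weierstrass on the unit circle and dominated convergence) to
every continuous function of e^(it), to the indicators of closed sets and, by induction
over the Borel sets, to every indicator; so it vanishes almost everywhere. The converse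
direction is trivial, as V_phi = 0 when the coefficients vanish.\<close>

section \<open>Square-summable sequences\<close>

lemma ell2_norm_le_l2norm:
  assumes "c \<in> ell2"
  shows "norm (c m) \<le> l2norm c"
proof -
  have sum: "(\<lambda>m. (norm (c m))^2) summable_on UNIV"
    using assms by (simp add: ell2_def)
  have "(norm (c m))^2 = infsum (\<lambda>m. (norm (c m))^2) {m}"
    by simp
  also have "\<dots> \<le> infsum (\<lambda>m. (norm (c m))^2) UNIV"
    by (rule infsum_mono_neutral[OF summable_on_subset_banach[OF sum subset_UNIV] sum]) auto
  finally show ?thesis
    unfolding l2norm_def by (metis norm_ge_zero real_le_rsqrt)
qed

lemma ell2_diff:
  assumes "c \<in> ell2" "d \<in> ell2"
  shows "(\<lambda>m. c m - d m) \<in> ell2"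
proof -
  have "(norm (c m - d m))^2 \<le> 2 * (norm (c m))^2 + 2 * (norm (d m))^2" for m
  proof -
    have "(norm (c m - d m))^2 \<le> (norm (c m) + norm (d m))^2"
      by (intro power_mono norm_triangle_ineq4) auto
    also have "\<dots> \<le> 2 * (norm (c m))^2 + 2 * (norm (d m))^2"
      using sum_squares_bound[of "norm (c m)" "norm (d m)"] by (simp add: power2_sum)
    finally show ?thesis .
  qed
  moreover have "(\<lambda>m. 2 * (norm (c m))^2 + 2 * (norm (d m))^2) summable_on UNIV"
    using assms unfolding ell2_def by (intro summable_on_add summable_on_cmult_right) auto
  ultimately show ?thesis
    unfolding ell2_def by (auto intro: summable_on_comparison_test)
qed

lemma ell2_comp_inj:
  assumes "inj h" "c \<in> ell2"
  shows "c \<circ> h \<in> ell2"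
proof -
  have "(\<lambda>m. (norm (c m))^2) summable_on range h"
    using assms(2) summable_on_subset_banach unfolding ell2_def by blast
  then show ?thesis
    using summable_on_reindex[OF assms(1), of "\<lambda>m. (norm (c m))^2"] by (simp add: ell2_def o_def)
qed

lemma ell2_Proj: "c \<in> ell2 \<Longrightarrow> Proj c \<in> ell2"
  unfolding ell2_def Proj_def by (auto intro: summable_on_comparison_test)

lemma ell2_tendsto_zero:
  assumes "c \<in> ell2"
  shows "(\<lambda>k. c (int k)) \<longlonglongrightarrow> 0"
proof -
  have "(\<lambda>m. (norm (c m))^2) summable_on range int"
    using assms summable_on_subset_banach unfolding ell2_def by blast
  then have "summable (\<lambda>k. (norm (c (int k)))^2)"
    using summable_on_reindex[of int UNIV "\<lambda>m. (norm (c m))^2"]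
    by (simp add: o_def summable_on_imp_summable)
  then have "(\<lambda>k. sqrt ((norm (c (int k)))^2)) \<longlonglongrightarrow> sqrt 0"
    by (intro tendsto_real_sqrt summable_LIMSEQ_zero)
  then show ?thesis
    by (simp add: tendsto_norm_zero_iff)
qed

section \<open>Compactness forces vanishing Fourier coefficients\<close>

definition unit_seq :: "int \<Rightarrow> int \<Rightarrow> complex" where
  "unit_seq n = (\<lambda>m. if m = n then 1 else 0)"

lemma unit_seq_in_H2: "n \<ge> 0 \<Longrightarrow> unit_seq n \<in> H2"
  and l2norm_unit_seq: "l2norm (unit_seq n) = 1"
proof -
  have "((\<lambda>m. (norm (unit_seq n m))^2) has_sum 1) UNIV"
    by (rule has_sum_finite_neutralI[of "{n}"]) (auto simp: unit_seq_def)
  then show "n \<ge> 0 \<Longrightarrow> unit_seq n \<in> H2" "l2norm (unit_seq n) = 1"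
    by (auto simp: H2_def ell2_def l2norm_def unit_seq_def dest: has_sum_imp_summable infsumI)
qed

lemma Kop_unit_seq: "n \<ge> 0 \<Longrightarrow> Kop (unit_seq (2 * n)) = unit_seq n"
  unfolding Kop_def unit_seq_def by (rule ext) (simp, presburger)

lemma Mult_unit_seq: "Mult \<phi> (unit_seq n) = (\<lambda>m. fourier_coeff \<phi> (m - n))"
proof
  fix m
  have "((\<lambda>j. fourier_coeff \<phi> (m - j) * unit_seq n j) has_sum fourier_coeff \<phi> (m - n)) UNIV"
    by (rule has_sum_finite_neutralI[of "{n}"]) (auto simp: unit_seq_def)
  then show "Mult \<phi> (unit_seq n) m = fourier_coeff \<phi> (m - n)"
    unfolding Mult_def by (rule infsumI)
qed

lemma slant_HT_unit_seq:
  "n \<ge> 0 \<Longrightarrow> slant_HT \<phi> (unit_seq (2 * n)) = Proj (\<lambda>m. fourier_coeff \<phi> (2 * m - n))"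
  by (auto simp: slant_HT_def Kop_unit_seq Mult_unit_seq Wop_def Proj_def)

lemma fourier_coeff_eq_0_if_compact_slant_HT:
  assumes coeffs: "fourier_coeff \<phi> \<in> ell2" and compact: "compact_on_H2 (slant_HT \<phi>)"
  shows "fourier_coeff \<phi> j = 0"
proof -
  define a where "a = fourier_coeff \<phi>"
  define n where "n k = 2 * (int k + \<bar>j\<bar>) - j" for k
  define y where "y k = slant_HT \<phi> (unit_seq (2 * n k))" for k
  have n_nonneg: "n k \<ge> 0" for k
    unfolding n_def by simp
  have y: "y k = Proj (a \<circ> (\<lambda>m. 2 * m - n k))" for k
    unfolding y_def a_def using slant_HT_unit_seq n_nonneg by (simp add: o_def)
  have y_ell2: "y k \<in> ell2" for k
    unfolding y a_def by (intro ell2_Proj ell2_comp_inj coeffs) (auto simp: inj_on_def)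
  have y_at: "y k (int k + \<bar>j\<bar>) = a j" for k
    by (simp add: y Proj_def n_def)
  have bounded: "unit_seq (2 * n k) \<in> H2 \<and> l2norm (unit_seq (2 * n k)) \<le> 1" for k
    using n_nonneg by (simp add: unit_seq_in_H2 l2norm_unit_seq)
  obtain r g where r: "strict_mono r" and g: "g \<in> ell2"
    and lim: "(\<lambda>k. l2norm (\<lambda>m. y (r k) m - g m)) \<longlonglongrightarrow> 0"
    using compact[unfolded compact_on_H2_def, rule_format, of "\<lambda>k. unit_seq (2 * n k)", OF bounded]
    by (elim exE conjE) (rule that; simp add: y_def)
  have "g \<circ> (\<lambda>m. m + \<bar>j\<bar>) \<in> ell2"
    using g by (rule ell2_comp_inj[rotated]) (auto simp: inj_on_def)
  from LIMSEQ_subseq_LIMSEQ[OF ell2_tendsto_zero[OF this] r]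
  have g_lim: "(\<lambda>k. g (int (r k) + \<bar>j\<bar>)) \<longlonglongrightarrow> 0"
    by (simp add: o_def)
  define u where "u k = l2norm (\<lambda>m. y (r k) m - g m) + norm (g (int (r k) + \<bar>j\<bar>))" for k
  have "u \<longlonglongrightarrow> 0"
    unfolding u_def by (intro tendsto_add_zero lim tendsto_norm_zero g_lim)
  moreover have "norm (a j) \<le> u k" for k
  proof -
    let ?m = "int (r k) + \<bar>j\<bar>"
    have "norm (a j) \<le> norm (y (r k) ?m - g ?m) + norm (g ?m)"
      using norm_triangle_ineq[of "y (r k) ?m - g ?m" "g ?m"] y_at by simp
    also have "\<dots> \<le> u k"
      unfolding u_def using ell2_norm_le_l2norm[OF ell2_diff[OF y_ell2 g]] by simp
    finally show ?thesis .
  qed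
  ultimately have "norm (a j) \<le> 0"
    using LIMSEQ_le_const[of u 0 "norm (a j)"] by blast
  then show ?thesis
    by (simp add: a_def)
qed

section \<open>Integration over [0, 2 pi] and Bessel's inequality\<close>

lemma integrable_mult_bounded:
  fixes \<phi> g :: "'a \<Rightarrow> 'b::{real_normed_field,banach,second_countable_topology}"
  assumes "integrable M \<phi>" "g \<in> borel_measurable M" "AE x in M. norm (g x) \<le> B"
  shows "integrable M (\<lambda>x. \<phi> x * g x)"
proof (rule Bochner_Integration.integrable_bound[where f = "\<lambda>x. B *\<^sub>R \<phi> x"])
  show "integrable M (\<lambda>x. B *\<^sub>R \<phi> x)"
    using assms(1) by (rule integrable_scaleR_right)
  show "(\<lambda>x. \<phi> x * g x) \<in> borel_measurable M"
    using assms(1,2) by measurable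
  show "AE x in M. norm (\<phi> x * g x) \<le> norm (B *\<^sub>R \<phi> x)"
    using assms(3)
  proof eventually_elim
    case (elim x)
    then have "norm (\<phi> x) * norm (g x) \<le> norm (\<phi> x) * \<bar>B\<bar>"
      by (intro mult_left_mono) auto
    then show ?case
      by (simp add: norm_mult mult.commute)
  qed
qed

abbreviation LT :: "real measure" where
  "LT \<equiv> lebesgue_on {0..2*pi}"

lemma finite_measure_LT: "finite_measure LT"
  by (rule finite_measure_lebesgue_on) simp

lemma integrable_LT_bounded:
  fixes f :: "real \<Rightarrow> 'a::{banach,second_countable_topology}"
  assumes "f \<in> borel_measurable LT" "AE t in LT. norm (f t) \<le> B"
  shows "integrable LT f"
  using finite_measure.integrable_const_bound[OF finite_measure_LT] assms by blast

lemma measure_LT: "measure LT {0..2*pi} = 2 * pi"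
  by (simp add: measure_restrict_space)

lemma borel_measurable_LT_continuous:
  "continuous_on {0..2*pi} f \<Longrightarrow> f \<in> borel_measurable LT"
  by (rule continuous_imp_measurable_on_sets_lebesgue) auto

lemma borel_measurable_LT_indicator:
  "A \<in> sets borel \<Longrightarrow> (\<lambda>t. indicator A t :: real) \<in> borel_measurable LT"
  by (intro measurable_restrict_space1 measurable_completion) simp

lemma AE_LT_bounded_continuous:
  assumes "continuous_on {0..2*pi} f"
  obtains B where "AE t in LT. norm (f t) \<le> B"
proof -
  obtain B where "\<forall>t\<in>{0..2*pi}. norm (f t) \<le> B"
    using compact_imp_bounded[OF compact_continuous_image[OF assms]] unfolding bounded_iff by blast
  then show ?thesis
    by (intro that[of B] AE_I2) simp
qed

lemma integrable_LT_continuous: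
  fixes f :: "real \<Rightarrow> 'a::{banach,second_countable_topology}"
  assumes "continuous_on {0..2*pi} f"
  shows "integrable LT f"
  using AE_LT_bounded_continuous[OF assms] borel_measurable_LT_continuous[OF assms]
  by (metis integrable_LT_bounded)

lemma integrable_LT_mult_continuous:
  fixes \<phi> f :: "real \<Rightarrow> complex"
  assumes "integrable LT \<phi>" "continuous_on {0..2*pi} f"
  shows "integrable LT (\<lambda>t. \<phi> t * f t)"
  using AE_LT_bounded_continuous[OF assms(2)]
    integrable_mult_bounded[OF assms(1) borel_measurable_LT_continuous[OF assms(2)]]
  by metis

lemma integrable_Linf: "\<phi> \<in> Linf \<Longrightarrow> integrable LT \<phi>"
  unfolding Linf_def using integrable_LT_bounded by blast

lemma fourier_coeff_cis:
  "fourier_coeff \<phi> n = integral\<^sup>L LT (\<lambda>t. \<phi> t * cis (- (of_int n * t))) / (2 * pi)"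
  unfolding fourier_coeff_def by (simp add: cis_conv_exp mult.assoc)

lemma integrable_LT_cis: "integrable LT (\<lambda>t. cis (c * t))"
  by (intro integrable_LT_continuous continuous_intros)

lemma integral_LT_cis:
  "integral\<^sup>L LT (\<lambda>t. cis (of_int k * t)) = (if k = 0 then 2 * pi else 0)"
proof -
  have "integral\<^sup>L LT (\<lambda>t. cis (of_int k * t)) = integral {0..2*pi} (\<lambda>t. exp ((\<i> * of_int k) * of_real t))"
    using lebesgue_integral_eq_integral[OF integrable_LT_cis[of "of_int k"]]
    by (simp add: cis_conv_exp mult.assoc)
  also have "\<dots> = (if k = 0 then 2 * pi else 0)"
  proof (cases "k = 0")
    case False
    have "exp ((\<i> * of_int k) * of_real (2 * pi)) = cis (2 * pi * of_int k)"
      by (simp add: cis_conv_exp mult_ac)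
    then show ?thesis
      using False by (simp add: integral_exp)
  qed (simp add: scaleR_conv_of_real)
  finally show ?thesis .
qed

lemma bessel_inequality_finite:
  assumes meas: "\<phi> \<in> borel_measurable LT" and bound: "AE t in LT. norm (\<phi> t) \<le> C"
    and "finite F"
  shows "(\<Sum>n\<in>F. (norm (fourier_coeff \<phi> n))^2) \<le> C^2"
proof -
  define a where "a = fourier_coeff \<phi>"
  define s where "s t = (\<Sum>n\<in>F. a n * cis (of_int n * t))" for t
  define X where "X = (\<Sum>n\<in>F. (norm (a n))^2)"
  \<comment> \<open>Both the integral of phi * cnj s and that of |s|^2 equal 2 pi X, and AM-GM
    bounds the former by (2 pi C^2 + 2 pi X) / 2.\<close>
  have \<phi>_int: "integrable LT \<phi>"
    using meas bound by (rule integrable_LT_bounded)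
  have s_cont: "continuous_on {0..2*pi} s"
    unfolding s_def by (intro continuous_intros)
  have cnj_s: "cnj (s t) = (\<Sum>n\<in>F. cnj (a n) * cis (- (of_int n * t)))" for t
    by (simp add: s_def cis_cnj)
  have "integral\<^sup>L LT (\<lambda>t. \<phi> t * cnj (s t))
      = (\<Sum>n\<in>F. cnj (a n) * integral\<^sup>L LT (\<lambda>t. \<phi> t * cis (- (of_int n * t))))"
  proof -
    have "integrable LT (\<lambda>t. \<phi> t * cis (- (of_int n * t)))" for n
      using \<phi>_int by (rule integrable_LT_mult_continuous) (intro continuous_intros)
    moreover have "\<phi> t * cnj (s t) = (\<Sum>n\<in>F. cnj (a n) * (\<phi> t * cis (- (of_int n * t))))" for t
      by (simp add: cnj_s sum_distrib_left mult_ac)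
    ultimately show ?thesis
      by simp
  qed
  also have "\<dots> = (\<Sum>n\<in>F. cnj (a n) * (2 * pi * a n))"
    by (simp add: a_def fourier_coeff_cis)
  also have "\<dots> = of_real (2 * pi * X)"
    unfolding X_def of_real_sum sum_distrib_left
    by (intro sum.cong refl) (simp add: complex_norm_square[symmetric] mult_ac)
  finally have inner: "integral\<^sup>L LT (\<lambda>t. \<phi> t * cnj (s t)) = of_real (2 * pi * X)" .
  have "s t * cnj (s t) = (\<Sum>n\<in>F. \<Sum>m\<in>F. a n * cnj (a m) * cis (of_int (n - m) * t))" for t
    by (simp add: s_def sum_product cis_cnj cis_mult algebra_simps)
  then have "integral\<^sup>L LT (\<lambda>t. s t * cnj (s t))
      = (\<Sum>n\<in>F. \<Sum>m\<in>F. a n * cnj (a m) * integral\<^sup>L LT (\<lambda>t. cis (of_int (n - m) * t)))"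
    by (simp add: integrable_LT_cis)
  also have "\<dots> = (\<Sum>n\<in>F. a n * cnj (a n) * (2 * pi))"
    unfolding integral_LT_cis using \<open>finite F\<close> by (simp add: if_distrib if_distribR sum.delta cong: if_cong)
  also have "\<dots> = of_real (2 * pi * X)"
    unfolding X_def of_real_sum sum_distrib_left
    by (intro sum.cong refl) (simp add: complex_norm_square[symmetric] mult_ac)
  finally have "integral\<^sup>L LT (\<lambda>t. complex_of_real ((norm (s t))^2)) = of_real (2 * pi * X)"
    by (simp only: complex_norm_square)
  then have s_sq: "integral\<^sup>L LT (\<lambda>t. (norm (s t))^2) = 2 * pi * X"
    by (simp only: integral_complex_of_real of_real_eq_iff)
  have "norm (\<phi> t * cnj (s t)) \<le> (C^2 + (norm (s t))^2) / 2" if "norm (\<phi> t) \<le> C" for t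
  proof -
    have "norm (\<phi> t * cnj (s t)) \<le> C * norm (s t)"
      using that by (simp add: norm_mult mult_right_mono)
    also have "\<dots> \<le> (C^2 + (norm (s t))^2) / 2"
      using sum_squares_bound[of C "norm (s t)"] by simp
    finally show ?thesis .
  qed
  then have pointwise: "AE t in LT. norm (\<phi> t * cnj (s t)) \<le> (C^2 + (norm (s t))^2) / 2"
    using bound by (auto elim: AE_mp)
  have "X \<ge> 0"
    unfolding X_def by (simp add: sum_nonneg)
  then have "2 * pi * X = norm (integral\<^sup>L LT (\<lambda>t. \<phi> t * cnj (s t)))"
    by (simp only: inner norm_of_real) simp
  also have "\<dots> \<le> integral\<^sup>L LT (\<lambda>t. norm (\<phi> t * cnj (s t)))"
    by (rule integral_norm_bound)
  also have "\<dots> \<le> integral\<^sup>L LT (\<lambda>t. (C^2 + (norm (s t))^2) / 2)"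
    using pointwise
    by (intro integral_mono_AE integrable_norm integrable_LT_mult_continuous \<phi>_int
        integrable_LT_continuous continuous_intros s_cont) auto
  also have "\<dots> = (2 * pi * C^2 + 2 * pi * X) / 2"
    using s_sq integrable_LT_continuous[of "\<lambda>t. (norm (s t))^2"]
    by (simp add: continuous_intros s_cont measure_LT)
  finally show ?thesis
    by (simp add: X_def a_def)
qed

lemma fourier_coeff_ell2:
  assumes "\<phi> \<in> Linf"
  shows "fourier_coeff \<phi> \<in> ell2"
proof -
  obtain C where "\<phi> \<in> borel_measurable LT" "AE t in LT. norm (\<phi> t) \<le> C"
    using assms unfolding Linf_def by blast
  then have "(\<lambda>n. (norm (fourier_coeff \<phi> n))^2) summable_on UNIV"
    by (intro nonneg_bdd_above_summable_on bdd_aboveI[where M = "C^2"])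
       (auto intro: bessel_inequality_finite)
  then show ?thesis
    by (simp add: ell2_def)
qed

section \<open>Uniqueness of Fourier coefficients\<close>

inductive_set trig_poly :: "(real \<Rightarrow> complex) set" where
  cis: "(\<lambda>t. c * cis (of_int k * t)) \<in> trig_poly"
| add: "f \<in> trig_poly \<Longrightarrow> g \<in> trig_poly \<Longrightarrow> (\<lambda>t. f t + g t) \<in> trig_poly"

lemma trig_poly_mult:
  assumes "f \<in> trig_poly" "g \<in> trig_poly"
  shows "(\<lambda>t. f t * g t) \<in> trig_poly"
  using assms
proof (induction arbitrary: g rule: trig_poly.induct)
  case (cis c k)
  from cis.prems show ?case
  proof induction
    case (cis d l)
    have "(\<lambda>t. c * cis (of_int k * t) * (d * cis (of_int l * t))) = (\<lambda>t. (c * d) * cis (of_int (k + l) * t))"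
      by (simp add: cis_mult algebra_simps)
    then show ?case
      by (simp only: trig_poly.cis)
  next
    case (add g h)
    then show ?case
      using trig_poly.add[OF add.IH] by (simp add: distrib_left)
  qed
next
  case (add f1 f2)
  then show ?case
    using trig_poly.add[OF add.IH] by (simp add: distrib_right)
qed

lemma trig_poly_continuous: "f \<in> trig_poly \<Longrightarrow> continuous_on S f"
  by (induction rule: trig_poly.induct) (auto intro!: continuous_intros)

lemma real_polynomial_function_cis_trig_poly:
  assumes "real_polynomial_function p"
  shows "(\<lambda>t. complex_of_real (p (cis t))) \<in> trig_poly"
  using assms
proof induction
  case (linear p)
  have p: "p z = Re z * p 1 + Im z * p \<i>" for z
  proof -
    have "p z = p (Re z *\<^sub>R 1 + Im z *\<^sub>R \<i>)"
      by (rule arg_cong[of _ _ p]) (simp add: complex_eq_iff)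
    also have "\<dots> = Re z * p 1 + Im z * p \<i>"
      using linear_add[OF bounded_linear.linear[OF linear]]
        linear_scale[OF bounded_linear.linear[OF linear]] by simp
    finally show ?thesis .
  qed
  define \<alpha> where "\<alpha> = (complex_of_real (p 1) - \<i> * complex_of_real (p \<i>)) / 2"
  define \<beta> where "\<beta> = (complex_of_real (p 1) + \<i> * complex_of_real (p \<i>)) / 2"
  have "complex_of_real (p (cis t)) = \<alpha> * cis (of_int 1 * t) + \<beta> * cis (of_int (-1) * t)" for t
    unfolding p[of "cis t"] \<alpha>_def \<beta>_def by (simp add: complex_eq_iff field_simps)
  then show ?case
    by (simp only: trig_poly.add trig_poly.cis)
next
  case (const c)
  have "(\<lambda>t. complex_of_real c) = (\<lambda>t. of_real c * cis (of_int 0 * t))"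
    by simp
  then show ?case
    by (metis trig_poly.cis)
next
  case (add f g)
  then show ?case
    using trig_poly.add by simp
next
  case (mult f g)
  then show ?case
    using trig_poly_mult by simp
qed

lemma integral_LT_mult_trig_poly:
  assumes \<phi>: "integrable LT \<phi>" and coeffs: "\<And>n. fourier_coeff \<phi> n = 0" and "f \<in> trig_poly"
  shows "integral\<^sup>L LT (\<lambda>t. \<phi> t * f t) = 0"
  using \<open>f \<in> trig_poly\<close>
proof induction
  case (cis c k)
  have "integral\<^sup>L LT (\<lambda>t. \<phi> t * cis (of_int k * t)) = 2 * pi * fourier_coeff \<phi> (- k)"
    by (simp add: fourier_coeff_cis)
  then show ?case
    by (simp add: coeffs mult.left_commute[of _ c])
next
  case (add f g)
  then show ?case
    using integrable_LT_mult_continuous[OF \<phi> trig_poly_continuous] by (simp add: distrib_left)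
qed

lemma integral_mult_eq_0_limit:
  fixes \<phi> :: "'a \<Rightarrow> complex" and u :: "nat \<Rightarrow> 'a \<Rightarrow> real"
  assumes \<phi>: "integrable M \<phi>"
    and u_meas: "\<And>k. u k \<in> borel_measurable M"
    and u_bound: "\<And>k x. x \<in> space M \<Longrightarrow> \<bar>u k x\<bar> \<le> B"
    and u_lim: "\<And>x. x \<in> space M \<Longrightarrow> (\<lambda>k. u k x) \<longlonglongrightarrow> v x"
    and zero: "\<And>k. integral\<^sup>L M (\<lambda>x. \<phi> x * of_real (u k x)) = 0"
  shows "integral\<^sup>L M (\<lambda>x. \<phi> x * of_real (v x)) = 0"
proof -
  have "(\<lambda>k. integral\<^sup>L M (\<lambda>x. \<phi> x * of_real (u k x))) \<longlonglongrightarrow> integral\<^sup>L M (\<lambda>x. \<phi> x * of_real (v x))"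
  proof (rule integral_dominated_convergence[where w = "\<lambda>x. B * norm (\<phi> x)"])
    have "v \<in> borel_measurable M"
      using u_lim u_meas by (rule borel_measurable_LIMSEQ_real)
    then show "(\<lambda>x. \<phi> x * of_real (v x)) \<in> borel_measurable M"
      using \<phi> by measurable
    show "(\<lambda>x. \<phi> x * of_real (u k x)) \<in> borel_measurable M" for k
      using \<phi> u_meas[of k] by measurable
    show "integrable M (\<lambda>x. B * norm (\<phi> x))"
      using \<phi> by (intro integrable_mult_right integrable_norm)
    show "AE x in M. (\<lambda>k. \<phi> x * of_real (u k x)) \<longlonglongrightarrow> \<phi> x * of_real (v x)"
      using u_lim by (intro AE_I2 tendsto_mult tendsto_const tendsto_of_real)
    show "AE x in M. norm (\<phi> x * of_real (u k x)) \<le> B * norm (\<phi> x)" for k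
      using u_bound by (intro AE_I2) (simp add: norm_mult mult.commute[of B] mult_left_mono)
  qed
  then show ?thesis
    by (simp add: zero LIMSEQ_const_iff)
qed

lemma integral_LT_mult_continuous_cis:
  fixes h :: "complex \<Rightarrow> real"
  assumes \<phi>: "integrable LT \<phi>" and coeffs: "\<And>n. fourier_coeff \<phi> n = 0"
    and h: "continuous_on (sphere 0 1) h"
  shows "integral\<^sup>L LT (\<lambda>t. \<phi> t * of_real (h (cis t))) = 0"
proof -
  obtain H where H: "\<forall>z\<in>sphere 0 1. \<bar>h z\<bar> \<le> H"
    using compact_imp_bounded[OF compact_continuous_image[OF h compact_sphere]]
    unfolding bounded_iff by auto
  have "\<exists>p. polynomial_function p \<and> (\<forall>z\<in>sphere 0 1. \<bar>h z - p z\<bar> < inverse (Suc k))" for k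
    using Stone_Weierstrass_polynomial_function[OF compact_sphere h] by simp
  then obtain P where P_poly: "\<And>k. polynomial_function (P k)"
    and P_approx: "\<And>k z. z \<in> sphere 0 1 \<Longrightarrow> \<bar>h z - P k z\<bar> < inverse (Suc k)"
    by metis
  have P_cont: "continuous_on UNIV (\<lambda>t. P k (cis t))" for k
    by (intro continuous_on_compose2[OF continuous_on_polymonial_function[OF P_poly]] continuous_intros) auto
  show ?thesis
  proof (rule integral_mult_eq_0_limit[OF \<phi>, where u = "\<lambda>k t. P k (cis t)" and B = "H + 1"])
    show "(\<lambda>t. P k (cis t)) \<in> borel_measurable LT" for k
      using P_cont by (intro borel_measurable_LT_continuous) (rule continuous_on_subset, auto)
    show "\<bar>P k (cis t)\<bar> \<le> H + 1" for k t
    proof -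
      have "inverse (real (Suc k)) \<le> 1" "\<bar>h (cis t)\<bar> \<le> H"
        using H by (simp_all add: inverse_le_1_iff)
      then show ?thesis
        using P_approx[of "cis t" k] by simp
    qed
    show "(\<lambda>k. P k (cis t)) \<longlonglongrightarrow> h (cis t)" for t
    proof (rule LIM_zero_cancel, rule Lim_null_comparison[OF _ LIMSEQ_inverse_real_of_nat])
      show "\<forall>\<^sub>F k in sequentially. norm (P k (cis t) - h (cis t)) \<le> inverse (Suc k)"
        using P_approx[of "cis t"] by (intro always_eventually allI) (simp add: abs_minus_commute less_imp_le)
    qed
    show "integral\<^sup>L LT (\<lambda>t. \<phi> t * of_real (P k (cis t))) = 0" for k
      using P_poly by (intro integral_LT_mult_trig_poly[OF \<phi> coeffs] real_polynomial_function_cis_trig_poly)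
        (simp add: real_polynomial_function_eq)
  qed
qed

lemma integral_LT_mult_indicator_closed_cis:
  assumes \<phi>: "integrable LT \<phi>" and coeffs: "\<And>n. fourier_coeff \<phi> n = 0"
    and K: "closed K"
  shows "integral\<^sup>L LT (\<lambda>t. \<phi> t * of_real (indicator K (cis t))) = 0"
proof (cases "K = {}")
  case False
  show ?thesis
  proof (rule integral_mult_eq_0_limit[OF \<phi>, where u = "\<lambda>k t. max 0 (1 - real (Suc k) * infdist (cis t) K)" and B = 1])
    show "(\<lambda>t. max 0 (1 - real (Suc k) * infdist (cis t) K)) \<in> borel_measurable LT" for k
      by (intro borel_measurable_LT_continuous continuous_intros)
    show "\<bar>max 0 (1 - real (Suc k) * infdist (cis t) K)\<bar> \<le> 1" for k t
      using infdist_nonneg[of "cis t" K] by (simp add: abs_le_iff)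
    show "(\<lambda>k. max 0 (1 - real (Suc k) * infdist (cis t) K)) \<longlonglongrightarrow> indicator K (cis t)" for t
    proof (cases "cis t \<in> K")
      case True
      then show ?thesis
        using in_closed_iff_infdist_zero[OF K False] by simp
    next
      case outside: False
      define d where "d = infdist (cis t) K"
      have "d > 0"
        unfolding d_def using infdist_pos_not_in_closed[OF K False outside] .
      obtain N :: nat where "1 / d < N"
        using reals_Archimedean2 by blast
      have "max 0 (1 - real (Suc k) * d) = 0" if "k \<ge> N" for k
      proof -
        have "1 < real N * d"
          using \<open>1 / d < N\<close> \<open>d > 0\<close> by (simp add: field_simps)
        also have "\<dots> \<le> real (Suc k) * d"
          using that \<open>d > 0\<close> by (intro mult_right_mono) auto
        finally show ?thesis
          by simp
      qed
      then have "\<forall>\<^sub>F k in sequentially. max 0 (1 - real (Suc k) * d) = 0"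
        by (rule eventually_sequentiallyI)
      then show ?thesis
        using outside by (simp add: d_def tendsto_eventually)
    qed
    show "integral\<^sup>L LT (\<lambda>t. \<phi> t * of_real (max 0 (1 - real (Suc k) * infdist (cis t) K))) = 0" for k
      by (rule integral_LT_mult_continuous_cis[OF \<phi> coeffs, of "\<lambda>z. max 0 (1 - real (Suc k) * infdist z K)"])
        (intro continuous_intros)
  qed
qed simp

lemma Arg2pi_cis: "0 \<le> t \<Longrightarrow> t < 2 * pi \<Longrightarrow> Arg2pi (cis t) = t"
  using Arg2pi_exp[of "\<i> * of_real t"] by (simp add: cis_conv_exp)

lemma cis_in_image_iff:
  assumes "0 < t" "t < 2 * pi"
  shows "cis t \<in> cis ` (F \<inter> {0..2*pi}) \<longleftrightarrow> t \<in> F"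
proof
  assume "cis t \<in> cis ` (F \<inter> {0..2*pi})"
  then obtain s where s: "s \<in> F" "0 \<le> s" "s \<le> 2 * pi" and "cis t = cis s"
    by auto
  define s' where "s' = (if s = 2 * pi then 0 else s)"
  have "cis s' = cis s" "0 \<le> s'" "s' < 2 * pi"
    using s unfolding s'_def by auto
  have "t = Arg2pi (cis t)"
    using assms by (simp add: Arg2pi_cis)
  also have "\<dots> = s'"
    using \<open>cis t = cis s\<close> \<open>cis s' = cis s\<close>[symmetric] \<open>0 \<le> s'\<close> \<open>s' < 2 * pi\<close>
    by (simp add: Arg2pi_cis)
  finally have "t = s'" .
  then show "t \<in> F"
    using assms s unfolding s'_def by (simp split: if_splits)
next
  assume "t \<in> F"
  with assms show "cis t \<in> cis ` (F \<inter> {0..2*pi})"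
    by (intro imageI) simp
qed

lemma integral_LT_mult_indicator_closed:
  assumes \<phi>: "integrable LT \<phi>" and coeffs: "\<And>n. fourier_coeff \<phi> n = 0"
    and F: "closed F"
  shows "integral\<^sup>L LT (\<lambda>t. \<phi> t * of_real (indicator F t)) = 0"
proof -
  define K where "K = cis ` (F \<inter> {0..2*pi})"
  have K: "closed K"
    unfolding K_def
    by (intro compact_imp_closed compact_continuous_image[OF _ closed_Int_compact[OF F compact_Icc]] continuous_intros)
  have "AE t in LT. t \<notin> {0, 2 * pi}"
    by (rule AE_not_in) simp
  then have ae: "AE t in LT. \<phi> t * of_real (indicator F t) = \<phi> t * of_real (indicator K (cis t))"
  proof (rule AE_mp, intro AE_I2 impI)
    fix t
    assume "t \<in> space LT" "t \<notin> {0, 2 * pi}"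
    then have "0 < t" "t < 2 * pi"
      by auto
    then show "\<phi> t * of_real (indicator F t) = \<phi> t * of_real (indicator K (cis t))"
      by (simp add: K_def cis_in_image_iff indicator_def)
  qed
  have "integral\<^sup>L LT (\<lambda>t. \<phi> t * of_real (indicator F t))
      = integral\<^sup>L LT (\<lambda>t. \<phi> t * of_real (indicator K (cis t)))"
  proof (rule integral_cong_AE)
    have [measurable]: "\<phi> \<in> borel_measurable LT" "cis \<in> borel_measurable LT" "K \<in> sets borel"
        "(\<lambda>t. indicator F t :: real) \<in> borel_measurable LT"
      using \<phi> K F continuous_on_cis[OF continuous_on_id']
      by (auto intro: borel_measurable_LT_continuous borel_measurable_LT_indicator)
    show "(\<lambda>t. \<phi> t * of_real (indicator F t)) \<in> borel_measurable LT"
      by measurable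
    show "(\<lambda>t. \<phi> t * of_real (indicator K (cis t))) \<in> borel_measurable LT"
      by measurable
  qed (fact ae)
  also have "\<dots> = 0"
    using integral_LT_mult_indicator_closed_cis[OF \<phi> coeffs K] .
  finally show ?thesis .
qed

lemma integrable_LT_mult_indicator:
  fixes \<phi> :: "real \<Rightarrow> complex"
  assumes "integrable LT \<phi>" "A \<in> sets borel"
  shows "integrable LT (\<lambda>t. \<phi> t * of_real (indicator A t))"
proof (rule integrable_mult_bounded[OF assms(1), where B = 1])
  show "(\<lambda>t. complex_of_real (indicator A t)) \<in> borel_measurable LT"
    using borel_measurable_LT_indicator[OF assms(2)] by measurable
qed (simp add: indicator_def)

lemma integral_LT_mult_indicator_borel:
  assumes \<phi>: "integrable LT \<phi>" and coeffs: "\<And>n. fourier_coeff \<phi> n = 0"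
    and "A \<in> sets borel"
  shows "integral\<^sup>L LT (\<lambda>t. \<phi> t * of_real (indicator A t)) = 0"
  using \<open>A \<in> sets borel\<close>
proof (induction rule: borel_set_induct)
  case empty
  then show ?case
    by simp
next
  case (interval a b)
  then show ?case
    using integral_LT_mult_indicator_closed[OF \<phi> coeffs] by simp
next
  case (compl A)
  have "integral\<^sup>L LT \<phi> = 2 * pi * fourier_coeff \<phi> 0"
    by (simp add: fourier_coeff_cis)
  moreover have "integrable LT (\<lambda>t. \<phi> t * of_real (indicator A t))"
    using \<phi> compl.hyps by (rule integrable_LT_mult_indicator)
  moreover have "\<phi> t * of_real (indicator (- A) t) = \<phi> t - \<phi> t * of_real (indicator A t)" for t
    by (simp add: indicator_def)
  ultimately show ?case
    using \<phi> compl.IH coeffs by simp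
next
  case (union f)
  have borel_Union: "(\<Union>i\<in>I. f i) \<in> sets borel" for I
    using union.hyps(2) by blast
  show ?case
  proof (rule integral_mult_eq_0_limit[OF \<phi>, where u = "\<lambda>k. indicator (\<Union>i<k. f i)" and B = 1])
    show "(indicator (\<Union>i<k. f i) :: real \<Rightarrow> real) \<in> borel_measurable LT" for k
      using borel_measurable_LT_indicator[OF borel_Union] by simp
    show "\<bar>indicator (\<Union>i<k. f i) t :: real\<bar> \<le> 1" for k t
      by (simp add: indicator_def)
    show "(\<lambda>k. indicator (\<Union>i<k. f i) t :: real) \<longlonglongrightarrow> indicator (\<Union>i. f i) t" for t
      by (rule LIMSEQ_indicator_UN)
    have "indicator (\<Union>i<k. f i) t = (\<Sum>i<k. indicator (f i) t :: real)" for k t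
      using union.hyps(1) by (intro indicator_UN_disjoint) (auto simp: disjoint_family_on_def)
    then show "integral\<^sup>L LT (\<lambda>t. \<phi> t * of_real (indicator (\<Union>i<k. f i) t)) = 0" for k
      using integrable_LT_mult_indicator[OF \<phi> union.hyps(2)] union.IH
      by (simp add: sum_distrib_left)
  qed
qed

theorem AE_eq_0_if_fourier_coeff_eq_0:
  assumes \<phi>: "integrable LT \<phi>" and coeffs: "\<And>n. fourier_coeff \<phi> n = 0"
  shows "AE t in LT. \<phi> t = 0"
proof (rule sigma_finite_measure.density_zero[OF finite_measure.axioms(1)[OF finite_measure_LT] \<phi>])
  fix A
  assume "A \<in> sets LT"
  then have A: "A \<in> sets lebesgue" "A \<subseteq> {0..2*pi}"
    by (auto simp: sets_restrict_space_iff)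
  obtain B N where B: "B \<in> sets borel" "negligible N" "B \<union> N = A"
    using sets_lebesgue_almost_borel[OF A(1)] by blast
  have "N \<in> null_sets LT"
    using B A(2) by (auto simp: null_sets_restrict_space negligible_iff_null_sets)
  then have "AE t in LT. t \<notin> N"
    by (rule AE_not_in)
  then have ae: "AE t in LT. indicator A t *\<^sub>R \<phi> t = \<phi> t * of_real (indicator B t)"
    by eventually_elim (auto simp: indicator_def B(3)[symmetric])
  have "set_lebesgue_integral LT A \<phi> = integral\<^sup>L LT (\<lambda>t. \<phi> t * of_real (indicator B t))"
    unfolding set_lebesgue_integral_def
  proof (rule integral_cong_AE[OF _ _ ae])
    show "(\<lambda>t. indicator A t *\<^sub>R \<phi> t) \<in> borel_measurable LT"
      using \<phi> \<open>A \<in> sets LT\<close> by measurable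
    show "(\<lambda>t. \<phi> t * of_real (indicator B t)) \<in> borel_measurable LT"
      using \<phi> borel_measurable_LT_indicator[OF B(1)] by measurable
  qed
  also have "\<dots> = 0"
    using \<phi> coeffs B(1) by (rule integral_LT_mult_indicator_borel)
  finally show "set_lebesgue_integral LT A \<phi> = 0" .
qed

lemma fourier_coeff_eq_0_if_AE_eq_0:
  assumes "AE t in LT. \<phi> t = 0"
  shows "fourier_coeff \<phi> n = 0"
proof -
  have "AE t in LT. \<phi> t * cis (- (of_int n * t)) = 0"
    using assms by eventually_elim simp
  then show ?thesis
    by (simp add: fourier_coeff_cis integral_eq_zero_AE)
qed

lemma slant_HT_eq_0:
  assumes "\<And>n. fourier_coeff \<phi> n = 0"
  shows "slant_HT \<phi> = (\<lambda>c m. 0)"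
  by (simp add: slant_HT_def Mult_def Proj_def Wop_def assms fun_eq_iff)

lemma compact_on_H2_0: "compact_on_H2 (\<lambda>c m. 0)"
proof -
  have "(\<lambda>m::int. 0::complex) \<in> ell2" "l2norm (\<lambda>m::int. 0::complex) = 0"
    by (simp_all add: ell2_def l2norm_def)
  then show ?thesis
    unfolding compact_on_H2_def by (auto intro!: exI[of _ id] simp: strict_mono_def)
qed

theorem mainTheorem7:
  fixes \<phi> :: "real \<Rightarrow> complex"
  assumes "\<phi> \<in> Linf"
  shows "compact_on_H2 (slant_HT \<phi>) \<longleftrightarrow> (AE t in lebesgue_on {0..2*pi}. \<phi> t = 0)"
proof
  assume "compact_on_H2 (slant_HT \<phi>)"
  with fourier_coeff_ell2[OF assms] have "fourier_coeff \<phi> n = 0" for n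
    by (rule fourier_coeff_eq_0_if_compact_slant_HT)
  with integrable_Linf[OF assms] show "AE t in lebesgue_on {0..2*pi}. \<phi> t = 0"
    by (rule AE_eq_0_if_fourier_coeff_eq_0)
next
  assume "AE t in lebesgue_on {0..2*pi}. \<phi> t = 0"
  then have "slant_HT \<phi> = (\<lambda>c m. 0)"
    by (intro slant_HT_eq_0 fourier_coeff_eq_0_if_AE_eq_0)
  then show "compact_on_H2 (slant_HT \<phi>)"
    by (simp add: compact_on_H2_0)
qed

end
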